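(* Let $R$ be a commutative domain with field of fractions $F$, let $A=(a_{i,j})\in R^{n\times m}$ have rank $r$, and let $k$ be an integer with $0\le k<r$ such that $\alpha^i\neq 0$ for $i=k,k+1,\dots,r$. Let $s,p$ be integers with $k<s\le n$ and $k<p\le m$. Define $L^k_s=(\alpha^j_{i,j})$ with $i=k+1,\dots,s$, $j=k+1,\dots,r$ (an $(s-k)\times(r-k)$ lower triangular matrix), $U^k_p=(\alpha^i_{i,j})$ with $i=k+1,\dots,r$, $j=k+1,\dots,p$ (an $(r-k)\times(p-k)$ upper triangular matrix), and the $(r-k)\times(r-k)$ diagonal matrix $D^k_{s,p}=\mathrm{diag}\big(\alpha^k(\alpha^{i-1}\alpha^{i})^{-1}\big)_{i=k+1,\dots,r}$ over $F$. Then $$\mathcal A^k_{s,p}=L^k_s\,D^k_{s,p}\,U^k_p,$$ i.e. for all $k<i\le s$, $k<j\le p$: $\alpha^{k+1}_{i,j}=\sum_{l=k+1}^{r}\alpha^l_{i,l}\,\alpha^k(\alpha^{l-1}\alpha^l)^{-1}\,\alpha^l_{l,j}$.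
   Context: For a matrix $A=(a_{i,j})\in R^{n\times m}$ and integers $k\ge1$, $1\le i\le n$, $1\le j\le m$, $\alpha^k_{i,j}$ denotes the $k\times k$ minor of $A$ formed by rows $1,2,\dots,k-1,i$ and columns $1,2,\dots,k-1,j$ (so it is $0$ if $i<k$ or $j<k$, because of a repeated row or column). Set $\alpha^0=1$ and $\alpha^k=\alpha^k_{k,k}$ (the $k$-th leading principal minor). For $0\le k<s\le n$ and $k<p\le m$, $\mathcal A^k_{s,p}$ denotes the $(s-k)\times(p-k)$ matrix $(\alpha^{k+1}_{i,j})_{i=k+1,\dots,s;\ j=k+1,\dots,p}$; in particular $\mathcal A^0_{n,m}=A$. *)

theory Defs
  imports "Jordan_Normal_Form.DL_Rank" "HOL-Computational_Algebra.Fraction_Field"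
begin

text \<open>Minors with the paper's 1-based indexing (JNF matrices are 0-based).
  alpha A k i j is the k x k minor of A formed by rows 1,...,k-1,i and
  columns 1,...,k-1,j (1-based), i.e. 0-based rows 0,...,k-2,i-1 and
  columns 0,...,k-2,j-1. If i < k (or j < k) a row (column) is repeated and the
  determinant is 0 automatically. For k = 0 this is the empty determinant 1.\<close>
definition alpha :: "'a::comm_ring_1 mat \<Rightarrow> nat \<Rightarrow> nat \<Rightarrow> nat \<Rightarrow> 'a" where
  "alpha A k i j = det (mat k k (\<lambda>(a, b).
      A $$ (if a < k - 1 then a else i - 1, if b < k - 1 then b else j - 1)))"

definition alpha_lead :: "'a::comm_ring_1 mat \<Rightarrow> nat \<Rightarrow> 'a" where
  "alpha_lead A k = (if k = 0 then 1 else alpha A k k k)"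

definition rank_frac :: "'a::idom mat \<Rightarrow> nat" where
  "rank_frac A = vec_space.rank (dim_row A) (map_mat to_fract A)"

end

theory Submission
  imports Defs "Jordan_Normal_Form.DL_Rank_Submatrix"
begin

text \<open>Let \<open>d l = \<alpha>\<^sup>l\<close> and \<open>g l = \<alpha>\<^sup>l\<^sup>+\<^sup>1\<^sub>i\<^sub>,\<^sub>j\<close>. Both are determinants of the leading
  \<open>l \<times> l\<close> block bordered by further rows and columns, and Sylvester's identity for such
  bordered determinants, obtained from the Schur complement formula, gives
  \<open>g (l+1) d l = d (l+1) g l - \<alpha>\<^sup>l\<^sup>+\<^sup>1\<^sub>i\<^sub>,\<^sub>l\<^sub>+\<^sub>1 \<alpha>\<^sup>l\<^sup>+\<^sup>1\<^sub>l\<^sub>+\<^sub>1\<^sub>,\<^sub>j\<close>. After division by \<open>d l d (l+1)\<close> the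
  quotients \<open>g l / d l\<close> telescope from \<open>l = k\<close> to \<open>l = r\<close>, and \<open>g r = 0\<close> because it is an
  \<open>(r+1)\<close>-minor of a matrix of rank \<open>r\<close>.\<close>

lemma det_four_block_mat_schur:
  fixes P :: "'a::idom mat"
  assumes P: "P \<in> carrier_mat l l" and B: "B \<in> carrier_mat l q" and C: "C \<in> carrier_mat q l"
    and D: "D \<in> carrier_mat q q" and Q: "Q \<in> carrier_mat l l" and QP: "Q * P = 1\<^sub>m l"
  shows "det (four_block_mat P B C D) = det P * det (D - C * Q * B)"
proof -
  \<comment> \<open>Left multiplication by \<open>L\<close> clears the lower left block and leaves the determinant.\<close>
  define L where "L = four_block_mat (1\<^sub>m l) (0\<^sub>m l q) (- (C * Q)) (1\<^sub>m q)"
  have CQ: "C * Q \<in> carrier_mat q l" using C Q by (rule mult_carrier_mat)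
  have mCQ: "- (C * Q) \<in> carrier_mat q l" using CQ by (rule uminus_carrier_mat)
  have CQB: "C * Q * B \<in> carrier_mat q q" using CQ B by (rule mult_carrier_mat)
  have det_L: "det L = 1" unfolding L_def
    by (subst det_four_block_mat_upper_right_zero[OF one_carrier_mat refl mCQ one_carrier_mat]) simp
  have upper_left: "1\<^sub>m l * P + 0\<^sub>m l q * C = P" using P C by simp
  have upper_right: "1\<^sub>m l * B + 0\<^sub>m l q * D = B" using B D by simp
  have lower_left: "- (C * Q) * P + 1\<^sub>m q * C = 0\<^sub>m q l"
  proof -
    have "- (C * Q) * P = - (C * Q * P)" using CQ P by (subst uminus_mult_left_mat) auto
    also have "C * Q * P = C" using assoc_mult_mat[OF C Q P] QP C by simp
    finally show ?thesis using C by simp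
  qed
  have lower_right: "- (C * Q) * B + 1\<^sub>m q * D = D - C * Q * B"
  proof -
    have "- (C * Q) * B = - (C * Q * B)" using CQ B by (subst uminus_mult_left_mat) auto
    then show ?thesis using D CQB by (simp add: minus_add_uminus_mat comm_add_mat[OF _ D])
  qed
  have LM: "L * four_block_mat P B C D = four_block_mat P B (0\<^sub>m q l) (D - C * Q * B)"
    unfolding L_def mult_four_block_mat[OF one_carrier_mat zero_carrier_mat mCQ one_carrier_mat P B C D]
    upper_left upper_right lower_left lower_right ..
  have "det (L * four_block_mat P B C D) = det L * det (four_block_mat P B C D)"
    unfolding L_def by (rule det_mult[OF four_block_carrier_mat four_block_carrier_mat])
      (rule one_carrier_mat P D)+
  then have "det (four_block_mat P B C D) = det (four_block_mat P B (0\<^sub>m q l) (D - C * Q * B))"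
    using LM det_L by simp
  also have "\<dots> = det P * det (D - C * Q * B)"
    by (rule det_four_block_mat_lower_left_zero[OF P B refl]) (rule minus_carrier_mat[OF CQB])
  finally show ?thesis .
qed

lemma det_2x2:
  fixes A :: "'a::comm_ring_1 mat"
  assumes A: "A \<in> carrier_mat 2 2"
  shows "det A = A $$ (0,0) * A $$ (1,1) - A $$ (0,1) * A $$ (1,0)"
proof -
  have "det A = (\<Sum>i<2. A $$ (i,0) * cofactor A i 0)"
    by (rule laplace_expansion_column[OF A]) simp
  also have "\<dots> = A $$ (0,0) * cofactor A 0 0 + A $$ (1,0) * cofactor A 1 0"
    by (simp add: numeral_2_eq_2)
  also have "cofactor A 0 0 = A $$ (1,1)"
    unfolding cofactor_def using A by (simp add: det_single mat_delete_def)
  also have "cofactor A 1 0 = - A $$ (0,1)"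
    unfolding cofactor_def using A by (simp add: det_single mat_delete_def)
  finally show ?thesis by (simp add: algebra_simps)
qed

text \<open>The leading \<open>l \<times> l\<close> block of \<open>f\<close> bordered below by the rows \<open>rs\<close> and on the right
  by the columns \<open>cs\<close>, with 0-based indices: \<open>\<alpha>\<^sup>l\<^sup>+\<^sup>1\<^sub>i\<^sub>,\<^sub>j\<close> is \<open>det (border_mat A l [i-1] [j-1])\<close>.\<close>
definition border_mat :: "(nat \<Rightarrow> nat \<Rightarrow> 'a) \<Rightarrow> nat \<Rightarrow> nat list \<Rightarrow> nat list \<Rightarrow> 'a mat" where
  "border_mat f l rs cs = mat (l + length rs) (l + length cs)
     (\<lambda>(a, b). f (if a < l then a else rs ! (a - l)) (if b < l then b else cs ! (b - l)))"

definition schur_entry :: "(nat \<Rightarrow> nat \<Rightarrow> 'a::comm_ring_1) \<Rightarrow> nat \<Rightarrow> 'a mat \<Rightarrow> nat \<Rightarrow> nat \<Rightarrow> 'a" where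
  "schur_entry f l Q x y = f x y - (\<Sum>u<l. \<Sum>v<l. f x u * Q $$ (u, v) * f v y)"

lemma border_mat_Cons: "border_mat f l (l # rs) (l # cs) = border_mat f (Suc l) rs cs"
  unfolding border_mat_def by (rule eq_matI) (auto simp: nth_Cons' less_Suc_eq)

lemma det_border_mat_schur:
  fixes f :: "nat \<Rightarrow> nat \<Rightarrow> 'a::idom"
  assumes Q: "Q \<in> carrier_mat l l" and QP: "Q * border_mat f l [] [] = 1\<^sub>m l"
    and len: "length cs = length rs"
  shows "det (border_mat f l rs cs) = det (border_mat f l [] [])
    * det (mat (length rs) (length rs) (\<lambda>(a, b). schur_entry f l Q (rs ! a) (cs ! b)))"
proof -
  let ?q = "length rs"
  define B where "B = mat l ?q (\<lambda>(a, b). f a (cs ! b))"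
  define C where "C = mat ?q l (\<lambda>(a, b). f (rs ! a) b)"
  define D where "D = mat ?q ?q (\<lambda>(a, b). f (rs ! a) (cs ! b))"
  have P: "border_mat f l [] [] \<in> carrier_mat l l" unfolding border_mat_def by simp
  have blocks: "border_mat f l rs cs = four_block_mat (border_mat f l [] []) B C D"
    by (rule eq_matI) (auto simp: border_mat_def B_def C_def D_def len)
  have "(C * Q * B) $$ (a, b) = (\<Sum>u<l. \<Sum>v<l. f (rs ! a) u * Q $$ (u, v) * f v (cs ! b))"
    if "a < ?q" "b < ?q" for a b
    using that Q
    by (simp add: B_def C_def scalar_prod_def sum_distrib_left sum_distrib_right mult.assoc
        atLeast0LessThan) (rule sum.swap)
  then have schur: "D - C * Q * B = mat ?q ?q (\<lambda>(a, b). schur_entry f l Q (rs ! a) (cs ! b))"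
    using Q by (intro eq_matI) (auto simp: D_def C_def B_def schur_entry_def)
  have "B \<in> carrier_mat l ?q" "C \<in> carrier_mat ?q l" "D \<in> carrier_mat ?q ?q"
    by (simp_all add: B_def C_def D_def)
  then have "det (four_block_mat (border_mat f l [] []) B C D)
      = det (border_mat f l [] []) * det (D - C * Q * B)"
    using det_four_block_mat_schur[OF P _ _ _ Q QP] by blast
  then show ?thesis unfolding blocks schur .
qed

lemma det_border_mat_sylvester:
  fixes f :: "nat \<Rightarrow> nat \<Rightarrow> 'a::field"
  assumes nonsing: "det (border_mat f l [] []) \<noteq> 0"
  shows "det (border_mat f l [i0, i1] [j0, j1]) * det (border_mat f l [] []) =
    det (border_mat f l [i0] [j0]) * det (border_mat f l [i1] [j1])
    - det (border_mat f l [i0] [j1]) * det (border_mat f l [i1] [j0])"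
proof -
  define P where "P = border_mat f l [] []"
  define Q where "Q = (1 / det P) \<cdot>\<^sub>m adj_mat P"
  have P: "P \<in> carrier_mat l l" unfolding P_def border_mat_def by simp
  have Q: "Q \<in> carrier_mat l l" unfolding Q_def using adj_mat[OF P] by simp
  have "Q * P = (1 / det P) \<cdot>\<^sub>m (adj_mat P * P)"
    unfolding Q_def using adj_mat[OF P] P by (simp add: mult_smult_assoc_mat)
  also have "\<dots> = 1\<^sub>m l"
    using adj_mat(3)[OF P] nonsing by (intro eq_matI) (auto simp: P_def)
  finally have QP: "Q * border_mat f l [] [] = 1\<^sub>m l" unfolding P_def .
  let ?s = "schur_entry f l Q"
  have single: "det (border_mat f l [x] [y]) = det P * ?s x y" for x y
    using det_border_mat_schur[OF Q QP, of "[y]" "[x]"] by (simp add: P_def det_single)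
  have "det (mat 2 2 (\<lambda>(a, b). ?s ([i0, i1] ! a) ([j0, j1] ! b)))
      = ?s i0 j0 * ?s i1 j1 - ?s i0 j1 * ?s i1 j0"
    by (subst det_2x2) auto
  then have double: "det (border_mat f l [i0, i1] [j0, j1]) = det P * (?s i0 j0 * ?s i1 j1 - ?s i0 j1 * ?s i1 j0)"
    using det_border_mat_schur[OF Q QP, of "[j0, j1]" "[i0, i1]"] by (simp add: P_def numeral_2_eq_2)
  show ?thesis unfolding double single P_def[symmetric] by (simp add: algebra_simps)
qed

lemma pick_insert_lessThan:
  assumes "r \<le> x" and "a \<le> r"
  shows "pick (insert x {..<r}) a = (if a < r then a else x)"
  using assms(2)
proof (induction a)
  case 0
  then show ?case using assms(1) by (cases "r = 0") (auto intro!: Least_equality)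
next
  case (Suc a)
  then have "pick (insert x {..<r}) a = a" by simp
  then show ?case using Suc.prems assms(1) by (auto intro!: Least_equality)
qed

text \<open>Only agreement of \<open>f\<close> with \<open>B\<close> inside the index range is assumed, since \<open>B $$ (a, b)\<close>
  is an unspecified value outside it.\<close>
lemma det_border_mat_rank_eq_0:
  fixes B :: "'a::field mat"
  assumes B: "B \<in> carrier_mat n m" and rank: "vec_space.rank n B = r"
    and i: "i < n" and j: "j < m"
    and f: "\<And>a b. a < n \<Longrightarrow> b < m \<Longrightarrow> f a b = B $$ (a, b)"
  shows "det (border_mat f r [i] [j]) = 0"
proof -
  define M where "M = border_mat f r [i] [j]"
  have M: "M \<in> carrier_mat (Suc r) (Suc r)" unfolding M_def border_mat_def by simp
  consider "i < r" | "j < r" | "r \<le> i" "r \<le> j" by linarith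
  then show ?thesis
  proof cases
    case 1
    have "row M r = row M i"
      by (rule eq_vecI) (use 1 in \<open>auto simp: M_def border_mat_def\<close>)
    then show ?thesis using det_identical_rows[OF M, of r i] 1 unfolding M_def by simp
  next
    case 2
    have "col M r = col M j"
      by (rule eq_vecI) (use 2 in \<open>auto simp: M_def border_mat_def\<close>)
    then show ?thesis using det_identical_columns[OF M, of r j] 2 unfolding M_def by simp
  next
    case 3
    define I where "I = insert i {..<r}"
    define J where "J = insert j {..<r}"
    have I: "{a. a < n \<and> a \<in> I} = I" "card I = Suc r" unfolding I_def using 3 i by auto
    have J: "{b. b < m \<and> b \<in> J} = J" "card J = Suc r" unfolding J_def using 3 j by auto
    have "submatrix B I J = M"
    proof (rule eq_matI)
      fix a b assume "a < dim_row M" "b < dim_col M"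
      then have ab: "a \<le> r" "b \<le> r" using M by auto
      then have "submatrix B I J $$ (a, b) = B $$ (pick I a, pick J b)"
        using B I J by (intro submatrix_index) auto
      then show "submatrix B I J $$ (a, b) = M $$ (a, b)"
        using ab 3 i j unfolding I_def J_def
        by (auto simp: pick_insert_lessThan M_def border_mat_def f)
    qed (use B I J M in \<open>auto simp: dim_submatrix\<close>)
    moreover have "det (submatrix B I J) = 0"
      using vec_space.rank_gt_minor[OF B, of I J] rank J by fastforce
    ultimately show ?thesis unfolding M_def by simp
  qed
qed

lemma telescope_ratio_recurrence:
  fixes d g x :: "nat \<Rightarrow> 'a::field"
  assumes nonzero: "\<And>l. k \<le> l \<Longrightarrow> l \<le> r \<Longrightarrow> d l \<noteq> 0"
    and recurrence: "\<And>l. k \<le> l \<Longrightarrow> l < r \<Longrightarrow> g (Suc l) * d l = d (Suc l) * g l - x l"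
    and "k \<le> r"
  shows "g k / d k - g r / d r = (\<Sum>l = k..<r. x l / (d l * d (Suc l)))"
proof -
  have "x l / (d l * d (Suc l)) = g l / d l - g (Suc l) / d (Suc l)" if "l \<in> {k..<r}" for l
    using that nonzero[of l] nonzero[of "Suc l"] recurrence[of l] by (auto simp: field_simps)
  then have "(\<Sum>l = k..<r. x l / (d l * d (Suc l))) = - (\<Sum>l = k..<r. g (Suc l) / d (Suc l) - g l / d l)"
    by (simp add: sum_negf[symmetric])
  also have "\<dots> = g k / d k - g r / d r"
    using sum_Suc_diff'[OF \<open>k \<le> r\<close>, of "\<lambda>l. g l / d l"] by simp
  finally show ?thesis by simp
qed

lemma alpha_Suc_eq_det_border_mat:
  "alpha A (Suc l) (Suc i) (Suc j) = det (border_mat (\<lambda>a b. A $$ (a, b)) l [i] [j])"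
  unfolding alpha_def border_mat_def by (rule arg_cong[of _ _ det], rule eq_matI) auto

lemma alpha_lead_eq_det_border_mat:
  "alpha_lead A l = det (border_mat (\<lambda>a b. A $$ (a, b)) l [] [])"
proof (cases l)
  case 0
  then show ?thesis by (simp add: alpha_lead_def border_mat_def det_def)
next
  case (Suc l')
  then show ?thesis
    by (simp add: alpha_lead_def alpha_Suc_eq_det_border_mat border_mat_Cons[symmetric])
qed

lemma (in comm_ring_hom) hom_det_border_mat:
  "hom (det (border_mat f l rs cs)) = det (border_mat (\<lambda>a b. hom (f a b)) l rs cs)"
proof -
  have "map_mat hom (border_mat f l rs cs) = border_mat (\<lambda>a b. hom (f a b)) l rs cs"
    unfolding border_mat_def by (rule eq_matI) auto
  then show ?thesis by (metis hom_det)
qed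

interpretation to_fract_hom: comm_ring_hom "to_fract :: 'a::idom \<Rightarrow> 'a fract"
  by unfold_locales auto

lemma det_border_mat_expansion:
  fixes f :: "nat \<Rightarrow> nat \<Rightarrow> 'a::field"
  assumes nonzero: "\<And>l. k \<le> l \<Longrightarrow> l \<le> r \<Longrightarrow> det (border_mat f l [] []) \<noteq> 0"
    and vanishing: "det (border_mat f r [i] [j]) = 0" and "k \<le> r"
  shows "det (border_mat f k [i] [j]) = (\<Sum>l = k..<r. det (border_mat f k [] [])
    * (det (border_mat f l [i] [l]) * det (border_mat f l [l] [j]))
    / (det (border_mat f l [] []) * det (border_mat f (Suc l) [] [])))"
proof -
  define d where "d l = det (border_mat f l [] [])" for l
  define g where "g l = det (border_mat f l [i] [j])" for l
  define x where "x l = det (border_mat f l [i] [l]) * det (border_mat f l [l] [j])" for l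
  have "g (Suc l) * d l = d (Suc l) * g l - x l" if "k \<le> l" "l < r" for l
    using det_border_mat_sylvester[OF nonzero, of l l i l j] that
    unfolding border_mat_Cons g_def d_def x_def by (simp add: mult.commute)
  then have "g k / d k - g r / d r = (\<Sum>l = k..<r. x l / (d l * d (Suc l)))"
    using nonzero \<open>k \<le> r\<close> by (intro telescope_ratio_recurrence) (auto simp: d_def)
  then have "g k = d k * (\<Sum>l = k..<r. x l / (d l * d (Suc l)))"
    using nonzero[of k] vanishing \<open>k \<le> r\<close> by (simp add: g_def d_def field_simps)
  then show ?thesis by (simp add: sum_distrib_left g_def d_def x_def)
qed

theorem theorem2:
  fixes A :: "'a::idom mat" and n m r k s p :: nat
  assumes "A \<in> carrier_mat n m"
    and "rank_frac A = r"
    and "k < r"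
    and "\<forall>i\<in>{k..r}. alpha_lead A i \<noteq> 0"
    and "k < s" and "s \<le> n" and "k < p" and "p \<le> m"
  shows "\<forall>i\<in>{k+1..s}. \<forall>j\<in>{k+1..p}.
    to_fract (alpha A (k+1) i j) =
      (\<Sum>l = k+1..r. to_fract (alpha A l i l) * to_fract (alpha_lead A k)
          / (to_fract (alpha_lead A (l-1)) * to_fract (alpha_lead A l))
          * to_fract (alpha A l l j))"
proof (intro ballI)
  fix i' j' assume "i' \<in> {k+1..s}" "j' \<in> {k+1..p}"
  then obtain i j where ij: "i' = Suc i" "j' = Suc j" "i < n" "j < m"
    using assms(6,8) by (cases i'; cases j') auto
  define F where "F a b = to_fract (A $$ (a, b))" for a b
  have minor: "to_fract (alpha A (Suc l) (Suc a) (Suc b)) = det (border_mat F l [a] [b])" for l a b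
    unfolding alpha_Suc_eq_det_border_mat to_fract_hom.hom_det_border_mat F_def ..
  have lead: "to_fract (alpha_lead A l) = det (border_mat F l [] [])" for l
    unfolding alpha_lead_eq_det_border_mat to_fract_hom.hom_det_border_mat F_def ..
  have "det (border_mat F r [i] [j]) = 0"
    using det_border_mat_rank_eq_0[of "map_mat to_fract A" n m r i j F] assms(1,2) ij
    by (simp add: F_def rank_frac_def)
  then have expansion: "det (border_mat F k [i] [j]) = (\<Sum>l = k..<r. det (border_mat F k [] [])
      * (det (border_mat F l [i] [l]) * det (border_mat F l [l] [j]))
      / (det (border_mat F l [] []) * det (border_mat F (Suc l) [] [])))"
    using assms(3,4) lead by (intro det_border_mat_expansion) (auto simp flip: lead)
  show "to_fract (alpha A (k+1) i' j') = (\<Sum>l = k+1..r. to_fract (alpha A l i' l)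
      * to_fract (alpha_lead A k) / (to_fract (alpha_lead A (l-1)) * to_fract (alpha_lead A l))
      * to_fract (alpha A l l j'))" (is "_ = ?rhs")
    unfolding ij Suc_eq_plus1[symmetric] minor expansion
    by (rule sum.reindex_bij_witness[of _ "\<lambda>l. l - 1" Suc]) (auto simp: minor lead)
qed

end
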